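(* (a) Let $x\in P$ and $(y,v')\in\mathcal{P}$ with $x\neq y$ and $v'\notin x'^{\perp}$ in $S'$. Then $d(x,(y,v'))=3$ in $\mathbb{S}$. (b) Let $u'\in P'$ and $(y,v')\in\mathcal{P}$ with $u'\neq v'$ and $y\notin u^{\perp}$ in $S$. Then $d(u',(y,v'))=3$ in $\mathbb{S}$.
   Context: Let $S=(P,L)$ and $S'=(P',L')$ be generalized quadrangles of order $(2,2)$ (every line has 3 points, every point lies on 3 lines, and for each point $x$ and line $l\not\ni x$ exactly one point of $l$ is collinear with $x$), with an isomorphism $x\mapsto x'$ from $S$ to $S'$ (write $u$ for the preimage of $u'\in P'$). In a point-line geometry, $x^{\perp}$ is $x$ together with all points collinear with $x$, and $A^{\perp}=\bigcap_{a\in A}a^{\perp}$. A triad is a set of three pairwise non-collinear points, complete if $|T^{\perp}|=3$. Let $\mathcal{P}=\{(x,y')\in P\times P':y'\in x'^{\perp}\}$ and $\mathcal{L}$ the set of all $3$-subsets $\{(x,u'),(y,v'),(z,w')\}$ of $\mathcal{P}$ where $T=\{x,y,z\}$ (three distinct points) is a line or complete triad of $S$ and $\{u',v',w'\}=T'^{\perp}$ in $S'$ with $u',v',w'$ distinct. The geometry $\mathbb{S}=(\mathbb{P},\mathbb{L})$ has point set $\mathbb{P}=\mathcal{P}\cup P\cup P'$ (disjoint union) and line set $\mathcal{L}\cup\{\{x,(x,u'),u'\}:(x,u')\in\mathcal{P}\}$. Distance $d$ is in the collinearity graph of $\mathbb{S}$. *)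

theory Defs
  imports Main "HOL-Library.Extended_Nat"
begin

definition collinear :: "'a set \<Rightarrow> 'a set set \<Rightarrow> 'a \<Rightarrow> 'a \<Rightarrow> bool" where
  "collinear P L x y \<longleftrightarrow> x \<in> P \<and> y \<in> P \<and> x \<noteq> y \<and> (\<exists>l\<in>L. x \<in> l \<and> y \<in> l)"

definition perp :: "'a set \<Rightarrow> 'a set set \<Rightarrow> 'a \<Rightarrow> 'a set" where
  "perp P L x = {x} \<union> {y. collinear P L x y}"

definition perp_set :: "'a set \<Rightarrow> 'a set set \<Rightarrow> 'a set \<Rightarrow> 'a set" where
  "perp_set P L A = {y \<in> P. \<forall>a\<in>A. y \<in> perp P L a}"

definition gq22 :: "'a set \<Rightarrow> 'a set set \<Rightarrow> bool" where
  "gq22 P L \<longleftrightarrow>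
     (\<forall>l\<in>L. l \<subseteq> P \<and> card l = 3) \<and>
     (\<forall>x\<in>P. card {l\<in>L. x \<in> l} = 3) \<and>
     (\<forall>x\<in>P. \<forall>l\<in>L. x \<notin> l \<longrightarrow> (\<exists>!y. y \<in> l \<and> collinear P L x y))"

definition triad :: "'a set \<Rightarrow> 'a set set \<Rightarrow> 'a set \<Rightarrow> bool" where
  "triad P L T \<longleftrightarrow> T \<subseteq> P \<and> card T = 3 \<and> (\<forall>a\<in>T. \<forall>b\<in>T. \<not> collinear P L a b)"

definition complete_triad :: "'a set \<Rightarrow> 'a set set \<Rightarrow> 'a set \<Rightarrow> bool" where
  "complete_triad P L T \<longleftrightarrow> triad P L T \<and> card (perp_set P L T) = 3"

definition gq_iso :: "'a set \<Rightarrow> 'a set set \<Rightarrow> 'b set \<Rightarrow> 'b set set \<Rightarrow> ('a \<Rightarrow> 'b) \<Rightarrow> bool" where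
  "gq_iso P L P' L' f \<longleftrightarrow> bij_betw f P P' \<and> (\<lambda>l. f ` l) ` L = L'"

datatype ('a, 'b) spt = Pr 'a 'b | Lp 'a | Rp 'b

definition calP :: "'a set \<Rightarrow> 'a set set \<Rightarrow> 'b set \<Rightarrow> 'b set set \<Rightarrow> ('a \<Rightarrow> 'b) \<Rightarrow> ('a \<times> 'b) set" where
  "calP P L P' L' f = {(x, y'). x \<in> P \<and> y' \<in> perp P' L' (f x)}"

definition calL :: "'a set \<Rightarrow> 'a set set \<Rightarrow> 'b set \<Rightarrow> 'b set set \<Rightarrow> ('a \<Rightarrow> 'b) \<Rightarrow> ('a, 'b) spt set set" where
  "calL P L P' L' f =
    {{Pr x u', Pr y v', Pr z w'} | x y z u' v' w'.
        (x, u') \<in> calP P L P' L' f \<and> (y, v') \<in> calP P L P' L' f \<and> (z, w') \<in> calP P L P' L' f \<and>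
        x \<noteq> y \<and> y \<noteq> z \<and> x \<noteq> z \<and>
        ({x, y, z} \<in> L \<or> complete_triad P L {x, y, z}) \<and>
        u' \<noteq> v' \<and> v' \<noteq> w' \<and> u' \<noteq> w' \<and>
        {u', v', w'} = perp_set P' L' (f ` {x, y, z})}"

definition bbP :: "'a set \<Rightarrow> 'a set set \<Rightarrow> 'b set \<Rightarrow> 'b set set \<Rightarrow> ('a \<Rightarrow> 'b) \<Rightarrow> ('a, 'b) spt set" where
  "bbP P L P' L' f = {Pr x y' | x y'. (x, y') \<in> calP P L P' L' f} \<union> Lp ` P \<union> Rp ` P'"

definition bbL :: "'a set \<Rightarrow> 'a set set \<Rightarrow> 'b set \<Rightarrow> 'b set set \<Rightarrow> ('a \<Rightarrow> 'b) \<Rightarrow> ('a, 'b) spt set set" where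
  "bbL P L P' L' f = calL P L P' L' f \<union>
     {{Lp x, Pr x u', Rp u'} | x u'. (x, u') \<in> calP P L P' L' f}"

definition walk :: "'p set \<Rightarrow> 'p set set \<Rightarrow> nat \<Rightarrow> 'p \<Rightarrow> 'p \<Rightarrow> bool" where
  "walk P L n a b \<longleftrightarrow> (\<exists>p :: nat \<Rightarrow> 'p. p 0 = a \<and> p n = b \<and> (\<forall>i\<le>n. p i \<in> P) \<and>
       (\<forall>i<n. collinear P L (p i) (p (Suc i))))"

text \<open>Graph distance; infinity if no walk exists\<close>
definition gdist :: "'p set \<Rightarrow> 'p set set \<Rightarrow> 'p \<Rightarrow> 'p \<Rightarrow> enat" where
  "gdist P L a b = (INF n \<in> {n. walk P L n a b}. enat n)"

end

theory Submission
  imports Defs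
begin

text \<open>
  The only lines of \<open>\<SS>\<close> through a point \<open>x \<in> P\<close> are the lines \<open>{x, (x,u'), u'}\<close>, so the
  neighbours of \<open>x\<close> are the pairs \<open>(x,u')\<close> and the points \<open>u' \<in> x'\<^sup>\<perp>\<close>.  A path of length
  at most 2 from \<open>x\<close> to \<open>(y,v')\<close> would therefore pass through some \<open>(x,w')\<close> collinear with
  \<open>(y,v')\<close>, or through \<open>w' = v'\<close>; both force \<open>v' \<in> x'\<^sup>\<perp>\<close>.  A path of length 3 is
  \<open>x, u', y, (y,v')\<close> for a common neighbour \<open>u'\<close> of \<open>x'\<close> and \<open>y'\<close>, which exists in every
  generalized quadrangle.  Part (b) is symmetric, using that the isomorphism reflects collinearity.
\<close>

lemma collinear_sym: "collinear P L a b \<Longrightarrow> collinear P L b a"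
  unfolding collinear_def by blast

lemma collinearI: "l \<in> L \<Longrightarrow> l \<subseteq> P \<Longrightarrow> a \<in> l \<Longrightarrow> b \<in> l \<Longrightarrow> a \<noteq> b \<Longrightarrow> collinear P L a b"
  unfolding collinear_def by blast

lemma perp_sym: "b \<in> perp P L a \<longleftrightarrow> a \<in> perp P L b"
  unfolding perp_def collinear_def by blast

lemma perp_subset: "a \<in> P \<Longrightarrow> perp P L a \<subseteq> P"
  unfolding perp_def collinear_def by blast

lemma gq22_common_perp:
  assumes gq: "gq22 P L" and a: "a \<in> P" and b: "b \<in> P"
  shows "\<exists>u\<in>P. u \<in> perp P L a \<and> u \<in> perp P L b"
proof (cases "a \<in> perp P L b")
  case True
  then show ?thesis using a unfolding perp_def by blast
next
  case False
  have lines: "\<forall>l\<in>L. l \<subseteq> P" and "card {l\<in>L. b \<in> l} = 3"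
    and gq_axiom: "\<forall>x\<in>P. \<forall>l\<in>L. x \<notin> l \<longrightarrow> (\<exists>!y. y \<in> l \<and> collinear P L x y)"
    using gq b unfolding gq22_def by auto
  then obtain l where l: "l \<in> L" "b \<in> l"
    by (metis (mono_tags, lifting) card.empty empty_Collect_eq zero_neq_numeral)
  have lP: "l \<subseteq> P" using lines l by blast
  have "a \<notin> l" using False a b l lP unfolding perp_def collinear_def by blast
  then obtain u where u: "u \<in> l" "collinear P L a u" using gq_axiom a l by blast
  have "u \<noteq> b" using u False unfolding perp_def by (auto dest: collinear_sym)
  then have "collinear P L b u" using u(1) l lP b unfolding collinear_def by blast
  then show ?thesis using u lP unfolding perp_def by blast
qed

lemma gq_iso_reflects_perp:
  assumes iso: "gq_iso P L P' L' f" and lines: "\<forall>l\<in>L. l \<subseteq> P"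
    and a: "a \<in> P" and b: "b \<in> P" and fab: "f b \<in> perp P' L' (f a)"
  shows "b \<in> perp P L a"
proof -
  have inj: "inj_on f P" and LL: "(\<lambda>l. f ` l) ` L = L'"
    using iso unfolding gq_iso_def bij_betw_def by auto
  show ?thesis
  proof (cases "f b = f a")
    case True
    then show ?thesis using inj a b unfolding perp_def inj_on_def by blast
  next
    case False
    then obtain l where l: "l \<in> L" "f a \<in> f ` l" "f b \<in> f ` l"
      using fab LL unfolding perp_def collinear_def by blast
    have "a \<in> l" "b \<in> l" using l lines a b inj unfolding inj_on_def by blast+
    then show ?thesis using False l a b unfolding perp_def collinear_def by blast
  qed
qed

lemma walk_3I:
  assumes "collinear P L a b" "collinear P L b c" "collinear P L c d"
  shows "walk P L 3 a d"
  unfolding walk_def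
  by (rule exI[of _ "\<lambda>i. [a, b, c, d] ! i"])
    (use assms in \<open>auto simp: collinear_def numeral_3_eq_3 less_Suc_eq le_Suc_eq\<close>)

lemma walk_less_3D:
  assumes "walk P L n a b" "n < 3"
  shows "a = b \<or> collinear P L a b \<or> (\<exists>c. collinear P L a c \<and> collinear P L c b)"
proof -
  obtain p where p: "p 0 = a" "p n = b" "\<forall>i<n. collinear P L (p i) (p (Suc i))"
    using assms(1) unfolding walk_def by blast
  have "n = 0 \<or> n = 1 \<or> n = 2" using assms(2) by auto
  then show ?thesis using p by (metis One_nat_def Suc_1 lessI zero_less_Suc)
qed

lemma gdist_eqI:
  assumes "walk P L n a b" "\<And>m. m < n \<Longrightarrow> \<not> walk P L m a b"
  shows "gdist P L a b = n"
  unfolding gdist_def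
proof (rule antisym)
  show "(INF m \<in> {m. walk P L m a b}. enat m) \<le> enat n"
    using assms(1) by (simp add: INF_lower)
  show "enat n \<le> (INF m \<in> {m. walk P L m a b}. enat m)"
  proof (rule INF_greatest)
    fix m assume "m \<in> {m. walk P L m a b}"
    then have "\<not> m < n" using assms(2) by blast
    then show "enat n \<le> enat m" by simp
  qed
qed

lemma gdist_eq_3I:
  assumes "walk P L 3 a b" "a \<noteq> b" "\<not> collinear P L a b"
    "\<And>c. collinear P L a c \<Longrightarrow> \<not> collinear P L c b"
  shows "gdist P L a b = 3"
proof -
  have "\<not> walk P L m a b" if "m < 3" for m
  proof
    assume "walk P L m a b"
    from walk_less_3D[OF this that] show False using assms(2-4) by blast
  qed
  then have "gdist P L a b = enat 3" by (rule gdist_eqI[OF assms(1)])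
  then show ?thesis by (simp add: numeral_eq_enat)
qed

locale bbS =
  fixes P :: "'a set" and L :: "'a set set" and P' :: "'b set" and L' :: "'b set set"
    and f :: "'a \<Rightarrow> 'b"
begin

abbreviation coll where "coll \<equiv> collinear (bbP P L P' L' f) (bbL P L P' L' f)"

abbreviation distance where "distance \<equiv> gdist (bbP P L P' L' f) (bbL P L P' L' f)"

lemma coll_vertical:
  assumes xu: "(x, u') \<in> calP P L P' L' f" and u: "u' \<in> P'"
    and "p \<in> {Lp x, Pr x u', Rp u'}" "q \<in> {Lp x, Pr x u', Rp u'}" "p \<noteq> q"
  shows "coll p q"
proof (rule collinearI[where l = "{Lp x, Pr x u', Rp u'}"])
  show "{Lp x, Pr x u', Rp u'} \<in> bbL P L P' L' f"
    using xu unfolding bbL_def by blast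
  show "{Lp x, Pr x u', Rp u'} \<subseteq> bbP P L P' L' f"
    using xu u unfolding bbP_def calP_def by blast
qed (fact assms)+

lemma calL_Pr_only: "l \<in> calL P L P' L' f \<Longrightarrow> q \<in> l \<Longrightarrow> \<exists>a b. q = Pr a b"
  unfolding calL_def by blast

lemma coll_LpD:
  assumes "coll (Lp x) q"
  shows "\<exists>u'. (x, u') \<in> calP P L P' L' f \<and> (q = Pr x u' \<or> q = Rp u')"
proof -
  obtain l where l: "l \<in> bbL P L P' L' f" "Lp x \<in> l" "q \<in> l" "q \<noteq> Lp x"
    using assms unfolding collinear_def by blast
  then have "l \<notin> calL P L P' L' f" using calL_Pr_only by blast
  then obtain z u' where "l = {Lp z, Pr z u', Rp u'}" "(z, u') \<in> calP P L P' L' f"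
    using l(1) unfolding bbL_def by blast
  then show ?thesis using l by auto
qed

lemma coll_RpD:
  assumes "coll (Rp u') q"
  shows "\<exists>z. (z, u') \<in> calP P L P' L' f \<and> (q = Pr z u' \<or> q = Lp z)"
proof -
  obtain l where l: "l \<in> bbL P L P' L' f" "Rp u' \<in> l" "q \<in> l" "q \<noteq> Rp u'"
    using assms unfolding collinear_def by blast
  then have "l \<notin> calL P L P' L' f" using calL_Pr_only by blast
  then obtain z w' where "l = {Lp z, Pr z w', Rp w'}" "(z, w') \<in> calP P L P' L' f"
    using l(1) unfolding bbL_def by blast
  then show ?thesis using l by auto
qed

lemma coll_PrD:
  assumes "coll (Pr a b) (Pr c d)"
  shows "b \<in> perp P' L' (f c)"
proof -
  obtain l where l: "l \<in> bbL P L P' L' f" "Pr a b \<in> l" "Pr c d \<in> l" "Pr a b \<noteq> Pr c d"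
    using assms unfolding collinear_def by blast
  show ?thesis
  proof (cases "l \<in> calL P L P' L' f")
    case True
    then obtain x y z u' v' w' where l_eq: "l = {Pr x u', Pr y v', Pr z w'}"
      and "{u', v', w'} = perp_set P' L' (f ` {x, y, z})"
      unfolding calL_def by blast
    then have "b \<in> perp_set P' L' (f ` {x, y, z})" "c \<in> {x, y, z}" using l by auto
    then show ?thesis unfolding perp_set_def by blast
  next
    case False
    then obtain z w' where "l = {Lp z, Pr z w', Rp w'}"
      using l(1) unfolding bbL_def by blast
    then show ?thesis using l by auto
  qed
qed

end

locale bbS_gq22_iso = bbS +
  assumes gq: "gq22 P L" and gq': "gq22 P' L'" and iso: "gq_iso P L P' L' f"
begin

lemma f_bij: "bij_betw f P P'"
  using iso unfolding gq_iso_def by blast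

lemma f_mem: "x \<in> P \<Longrightarrow> f x \<in> P'"
  using f_bij by (meson bij_betwE)

lemma inv_into_mem: "u' \<in> P' \<Longrightarrow> inv_into P f u' \<in> P"
  using f_bij by (auto simp: bij_betw_def inv_into_into)

lemma f_inv_into: "u' \<in> P' \<Longrightarrow> f (inv_into P f u') = u'"
  using f_bij by (auto simp: bij_betw_def f_inv_into_f)

lemma calP_memD:
  assumes "(x, u') \<in> calP P L P' L' f"
  shows "x \<in> P" "u' \<in> P'" "u' \<in> perp P' L' (f x)"
  using assms perp_subset[OF f_mem] unfolding calP_def by auto

lemma distance_Lp_Pr:
  assumes x: "x \<in> P" and yv: "(y, v') \<in> calP P L P' L' f" and xy: "x \<noteq> y"
    and v: "v' \<notin> perp P' L' (f x)"
  shows "distance (Lp x) (Pr y v') = 3"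
proof -
  have y: "y \<in> P" using calP_memD[OF yv] by blast
  obtain u' where u: "u' \<in> P'" "u' \<in> perp P' L' (f x)" "u' \<in> perp P' L' (f y)"
    using gq22_common_perp[OF gq' f_mem[OF x] f_mem[OF y]] by blast
  have xu: "(x, u') \<in> calP P L P' L' f" and yu: "(y, u') \<in> calP P L P' L' f"
    using x y u unfolding calP_def by auto
  show ?thesis
  proof (rule gdist_eq_3I)
    show "walk (bbP P L P' L' f) (bbL P L P' L' f) 3 (Lp x) (Pr y v')"
      using coll_vertical[OF xu] coll_vertical[OF yu] coll_vertical[OF yv] calP_memD[OF yv] u(1)
      by (intro walk_3I[where b = "Rp u'" and c = "Lp y"]) auto
    show "\<not> coll (Lp x) (Pr y v')" using coll_LpD xy by fastforce
    fix c
    assume "coll (Lp x) c"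
    then obtain w' where w: "(x, w') \<in> calP P L P' L' f" "c = Pr x w' \<or> c = Rp w'"
      using coll_LpD by blast
    show "\<not> coll c (Pr y v')"
    proof
      assume c: "coll c (Pr y v')"
      have "v' \<in> perp P' L' (f x)"
      proof (cases "c = Pr x w'")
        case True
        then have "coll (Pr y v') (Pr x w')" using collinear_sym[OF c] by simp
        then show ?thesis by (rule coll_PrD)
      next
        case False
        then have "coll (Rp w') (Pr y v')" using c w(2) by simp
        then have "v' = w'" using coll_RpD by fastforce
        then show ?thesis using calP_memD(3)[OF w(1)] by simp
      qed
      then show False using v by contradiction
    qed
  qed simp
qed

lemma distance_Rp_Pr:
  assumes u: "u' \<in> P'" and yv: "(y, v') \<in> calP P L P' L' f" and uv: "u' \<noteq> v'"
    and y_u: "y \<notin> perp P L (inv_into P f u')"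
  shows "distance (Rp u') (Pr y v') = 3"
proof -
  have y: "y \<in> P" and v: "v' \<in> P'" using calP_memD[OF yv] by blast+
  have lines: "\<forall>l\<in>L. l \<subseteq> P" using gq unfolding gq22_def by blast
  have u_y: "u' \<notin> perp P' L' (f y)"
  proof
    assume "u' \<in> perp P' L' (f y)"
    then have "f y \<in> perp P' L' (f (inv_into P f u'))"
      using perp_sym[of u' P' L' "f y"] f_inv_into[OF u] by simp
    then show False using gq_iso_reflects_perp[OF iso lines inv_into_mem[OF u] y] y_u by blast
  qed
  obtain w' where w: "w' \<in> P'" "w' \<in> perp P' L' u'" "w' \<in> perp P' L' v'"
    using gq22_common_perp[OF gq' u v] by blast
  define z where "z = inv_into P f w'"
  have z: "z \<in> P" "f z = w'" using inv_into_mem f_inv_into w(1) unfolding z_def by auto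
  have zu: "(z, u') \<in> calP P L P' L' f" and zv: "(z, v') \<in> calP P L P' L' f"
    using z w perp_sym[of w'] unfolding calP_def by auto
  show ?thesis
  proof (rule gdist_eq_3I)
    show "walk (bbP P L P' L' f) (bbL P L P' L' f) 3 (Rp u') (Pr y v')"
      using coll_vertical[OF zu u] coll_vertical[OF zv v] coll_vertical[OF yv v]
      by (intro walk_3I[where b = "Lp z" and c = "Rp v'"]) auto
    show "\<not> coll (Rp u') (Pr y v')" using coll_RpD uv by fastforce
    fix c
    assume "coll (Rp u') c"
    then obtain t where t: "(t, u') \<in> calP P L P' L' f" "c = Pr t u' \<or> c = Lp t"
      using coll_RpD by blast
    show "\<not> coll c (Pr y v')"
    proof
      assume c: "coll c (Pr y v')"
      have "u' \<in> perp P' L' (f y)"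
      proof (cases "c = Pr t u'")
        case True
        then show ?thesis using c coll_PrD by blast
      next
        case False
        then have "coll (Lp t) (Pr y v')" using c t(2) by simp
        then have "t = y" using coll_LpD by fastforce
        then show ?thesis using calP_memD(3)[OF t(1)] by simp
      qed
      then show False using u_y by contradiction
    qed
  qed simp
qed

end

theorem lemma4p4:
  fixes P :: "'a set" and L :: "'a set set" and P' :: "'b set" and L' :: "'b set set"
    and f :: "'a \<Rightarrow> 'b"
  assumes "gq22 P L" and "gq22 P' L'" and "gq_iso P L P' L' f"
  shows "(\<forall>x y v'. x \<in> P \<longrightarrow> (y, v') \<in> calP P L P' L' f \<longrightarrow> x \<noteq> y \<longrightarrow>
             v' \<notin> perp P' L' (f x) \<longrightarrow>
             gdist (bbP P L P' L' f) (bbL P L P' L' f) (Lp x) (Pr y v') = 3)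
       \<and> (\<forall>u' y v'. u' \<in> P' \<longrightarrow> (y, v') \<in> calP P L P' L' f \<longrightarrow> u' \<noteq> v' \<longrightarrow>
             y \<notin> perp P L (inv_into P f u') \<longrightarrow>
             gdist (bbP P L P' L' f) (bbL P L P' L' f) (Rp u') (Pr y v') = 3)"
proof -
  interpret bbS_gq22_iso P L P' L' f
    using assms by unfold_locales
  show ?thesis using distance_Lp_Pr distance_Rp_Pr by blast
qed

end
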